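(* Let $I$ be a set, $\theta$ an infinite cardinal, $\mu$ a cardinal and $\varepsilon$ an ordinal with $\mu=\mu^{<\theta}>\varepsilon$ or $\theta>\varepsilon$. Let $D$ be a $\theta$-complete $(\mu,\theta)$-regular filter on $I$ (i.e. on the Boolean algebra $\mathscr P(I)$), let $T$ be an $\mathbb L_{\theta,\theta}(\tau)$-theory and $\Delta$ a set of conjunctions of fewer than $\theta$ atomic formulas of $\mathbb L_{\theta,\theta}(\tau)$. Then the following are equivalent: (B) $D$ is a $(\mu,\theta,\varepsilon!,\Delta,T)$-moral filter on $\mathscr P(I)$; (C) for every sequence $\langle M_s:s\in I\rangle$ of models of $T$, the reduced product $\prod_{s\in I}M_s/D$ is $(\mu^+,\theta,\varepsilon!,\Delta)$-saturated.
   Context: $D$ is $(\mu,\theta)$-regular if there are $w_s\in[\mu]^{<\theta}$ ($s\in I$) with $\{s\in I:\alpha\in w_s\}\in D$ for every $\alpha<\mu$. $\bar x_{[\varepsilon]}=\langle x_\zeta:\zeta<\varepsilon\rangle$; formulas of $\Delta$ are regarded as $\varphi(\bar x_{[\varepsilon]},\bar y)$ (dummy variables allowed). Moral filter: for a filter $D$ on a complete Boolean algebra $\mathfrak B$, a $D$-$(\mu,\theta,\varepsilon!,\Delta,T)$-problem is $\bar{\mathbf a}=\langle\mathbf a_u:u\in[\mu]^{<\theta}\rangle$ with $\mathbf a_u\in D$, $u\subseteq v\Rightarrow\mathbf a_v\le\mathbf a_u$, $\mathbf a_\emptyset=1$, such that for some sequence $\langle\varphi_\alpha(\bar x_{[\varepsilon]},\bar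 y_\alpha):\alpha<\mu\rangle$ of formulas from $\Delta$, for every nonzero $\mathbf a\in\mathfrak B$ and every $u\in[\mu]^{<\theta}$ there are $M\models T$ and tuples $\bar b_\alpha$ ($\alpha\in u$) in $M$ such that for every $v\subseteq u$: if $\mathbf a\le\mathbf a_v$ then $M\models\exists\bar x_{[\varepsilon]}\bigwedge_{\alpha\in v}\varphi_\alpha(\bar x_{[\varepsilon]},\bar b_\alpha)$, and if $\mathbf a\le 1-\mathbf a_v$ then $M\models\neg\exists\bar x_{[\varepsilon]}\bigwedge_{\alpha\in v}\varphi_\alpha(\bar x_{[\varepsilon]},\bar b_\alpha)$. A solution is $\bar{\mathbf b}=\langle\mathbf b_u:u\in[\mu]^{<\theta}\rangle$ with $\mathbf b_u\in D$, $\mathbf b_\emptyset=1$, $\mathbf b_u\le\mathbf a_u$, and $\mathbf b_u=\bigcap_{\alpha\in u}\mathbf b_{\{\alpha\}}$. $D$ is $(\mu,\theta,\varepsilon!,\Delta,T)$-moral if every such problem has a solution. A structure $N$ is $(\lambda,\theta,\varepsilon!,\Delta)$-saturated if every set $p$ of fewer than $\lambda$ formulas $\varphi(\bar x_{[\varepsilon]},\bar a)$ with $\varphi\in\Delta$, $\bar a$ from $N$, such that every subset of $p$ of size $<\theta$ is realized in $N$, is realized in $N$. *)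

theory Defs
  imports Main "HOL-Library.FuncSet"
begin

unbundle cardinal_syntax

text \<open>Vocabulary tau: function symbols of type 'f, relation symbols of type 'r
  (each applied to a finite list of arguments).\<close>

datatype ('f, 'v) trm = Var 'v | App 'f "('f, 'v) trm list"

datatype ('r, 'f, 'v) atm = Eq "('f, 'v) trm" "('f, 'v) trm" | Rel 'r "('f, 'v) trm list"

datatype ('r, 'f, 'v, 'k) fm =
    Atom "('r, 'f, 'v) atm"
  | Neg "('r, 'f, 'v, 'k) fm"
  | Conj "'k set" "'k \<Rightarrow> ('r, 'f, 'v, 'k) fm"
  | Ex "'v set" "('r, 'f, 'v, 'k) fm"

fun trm_vars :: "('f, 'v) trm \<Rightarrow> 'v set" where
  "trm_vars (Var v) = {v}"
| "trm_vars (App f ts) = (\<Union>t\<in>set ts. trm_vars t)"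

fun atm_vars :: "('r, 'f, 'v) atm \<Rightarrow> 'v set" where
  "atm_vars (Eq t u) = trm_vars t \<union> trm_vars u"
| "atm_vars (Rel r ts) = (\<Union>t\<in>set ts. trm_vars t)"

primrec fv :: "('r, 'f, 'v, 'k) fm \<Rightarrow> 'v set" where
  "fv (Atom a) = atm_vars a"
| "fv (Neg \<phi>) = fv \<phi>"
| "fv (Conj K g) = (\<Union>k\<in>K. fv (g k))"
| "fv (Ex V \<phi>) = fv \<phi> - V"

text \<open>Formulas of L_{theta,theta}: conjunctions of fewer than theta formulas,
  existential quantification over fewer than theta variables.\<close>
primrec fm_wf :: "'th set \<Rightarrow> ('r, 'f, 'v, 'k) fm \<Rightarrow> bool" where
  "fm_wf \<Theta> (Atom a) = True"
| "fm_wf \<Theta> (Neg \<phi>) = fm_wf \<Theta> \<phi>"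
| "fm_wf \<Theta> (Conj K g) = ( |K| <o |\<Theta>| \<and> (\<forall>k\<in>K. fm_wf \<Theta> (g k)))"
| "fm_wf \<Theta> (Ex V \<phi>) = ( |V| <o |\<Theta>| \<and> fm_wf \<Theta> \<phi>)"

definition atomic_conj :: "'th set \<Rightarrow> ('r, 'f, 'v, 'k) fm \<Rightarrow> bool" where
  "atomic_conj \<Theta> \<phi> \<longleftrightarrow>
     (\<exists>K g. \<phi> = Conj K g \<and> |K| <o |\<Theta>| \<and> (\<forall>k\<in>K. \<exists>a. g k = Atom a))"

record ('m, 'f, 'r) struc =
  carrier :: "'m set"
  fn :: "'f \<Rightarrow> 'm list \<Rightarrow> 'm"
  rel :: "'r \<Rightarrow> 'm list \<Rightarrow> bool"

definition struc_ok :: "('m, 'f, 'r) struc \<Rightarrow> bool" where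
  "struc_ok M \<longleftrightarrow> carrier M \<noteq> {} \<and>
     (\<forall>f xs. set xs \<subseteq> carrier M \<longrightarrow> fn M f xs \<in> carrier M)"

fun eval :: "('m, 'f, 'r) struc \<Rightarrow> ('v \<Rightarrow> 'm) \<Rightarrow> ('f, 'v) trm \<Rightarrow> 'm" where
  "eval M \<sigma> (Var v) = \<sigma> v"
| "eval M \<sigma> (App f ts) = fn M f (map (eval M \<sigma>) ts)"

fun sat_atm :: "('m, 'f, 'r) struc \<Rightarrow> ('v \<Rightarrow> 'm) \<Rightarrow> ('r, 'f, 'v) atm \<Rightarrow> bool" where
  "sat_atm M \<sigma> (Eq t u) = (eval M \<sigma> t = eval M \<sigma> u)"
| "sat_atm M \<sigma> (Rel r ts) = rel M r (map (eval M \<sigma>) ts)"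

definition upd :: "'v set \<Rightarrow> ('v \<Rightarrow> 'm) \<Rightarrow> ('v \<Rightarrow> 'm) \<Rightarrow> 'v \<Rightarrow> 'm" where
  "upd V g \<sigma> = (\<lambda>v. if v \<in> V then g v else \<sigma> v)"

primrec sat :: "('r, 'f, 'v, 'k) fm \<Rightarrow> ('m, 'f, 'r) struc \<Rightarrow> ('v \<Rightarrow> 'm) \<Rightarrow> bool" where
  "sat (Atom a) M \<sigma> = sat_atm M \<sigma> a"
| "sat (Neg \<phi>) M \<sigma> = (\<not> sat \<phi> M \<sigma>)"
| "sat (Conj K g) M \<sigma> = (\<forall>k\<in>K. sat (g k) M \<sigma>)"
| "sat (Ex V \<phi>) M \<sigma> = (\<exists>g. (\<forall>v\<in>V. g v \<in> carrier M) \<and> sat \<phi> M (upd V g \<sigma>))"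

definition is_model :: "('m, 'f, 'r) struc \<Rightarrow> ('r, 'f, 'v, 'k) fm set \<Rightarrow> bool" where
  "is_model M T \<longleftrightarrow> struc_ok M \<and>
     (\<forall>\<phi>\<in>T. \<forall>\<sigma>. (\<forall>v. \<sigma> v \<in> carrier M) \<longrightarrow> sat \<phi> M \<sigma>)"

definition is_theory :: "'th set \<Rightarrow> ('r, 'f, 'v, 'k) fm set \<Rightarrow> bool" where
  "is_theory \<Theta> T \<longleftrightarrow> (\<forall>\<phi>\<in>T. fm_wf \<Theta> \<phi> \<and> fv \<phi> = {})"

definition proper_filter :: "'i set \<Rightarrow> 'i set set \<Rightarrow> bool" where
  "proper_filter I D \<longleftrightarrow> D \<subseteq> Pow I \<and> I \<in> D \<and> {} \<notin> D \<and>
     (\<forall>A B. A \<in> D \<longrightarrow> B \<in> D \<longrightarrow> A \<inter> B \<in> D) \<and>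
     (\<forall>A B. A \<in> D \<longrightarrow> A \<subseteq> B \<longrightarrow> B \<subseteq> I \<longrightarrow> B \<in> D)"

definition theta_complete :: "'th set \<Rightarrow> 'i set \<Rightarrow> 'i set set \<Rightarrow> bool" where
  "theta_complete \<Theta> I D \<longleftrightarrow> (\<forall>A. A \<subseteq> D \<longrightarrow> |A| <o |\<Theta>| \<longrightarrow> I \<inter> \<Inter>A \<in> D)"

definition regular_filter :: "'c set \<Rightarrow> 'th set \<Rightarrow> 'i set \<Rightarrow> 'i set set \<Rightarrow> bool" where
  "regular_filter Mu \<Theta> I D \<longleftrightarrow>
     (\<exists>w. (\<forall>s\<in>I. w s \<subseteq> Mu \<and> |w s| <o |\<Theta>| ) \<and>
          (\<forall>\<alpha>\<in>Mu. {s\<in>I. \<alpha> \<in> w s} \<in> D))"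

text \<open>mu = mu^{<theta}: mu^kappa \<le> mu for all cardinals kappa < theta
  (the reverse inequality is automatic as theta > 1).\<close>
definition cexp_lt_fixed :: "'c set \<Rightarrow> 'th set \<Rightarrow> bool" where
  "cexp_lt_fixed Mu \<Theta> \<longleftrightarrow>
     (\<forall>K. K \<subseteq> \<Theta> \<longrightarrow> |K| <o |\<Theta>| \<longrightarrow> |K \<rightarrow>\<^sub>E Mu| \<le>o |Mu| ) \<and> Mu \<noteq> {}"

definition solvable ::
  "('m, 'f, 'r) struc \<Rightarrow> 'v set \<Rightarrow> ('c \<Rightarrow> ('r, 'f, 'v, 'k) fm) \<Rightarrow> ('c \<Rightarrow> 'v \<Rightarrow> 'm) \<Rightarrow> 'c set \<Rightarrow> bool" where
  "solvable M E \<phi> b v \<longleftrightarrow>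
     (\<exists>g. (\<forall>x\<in>E. g x \<in> carrier M) \<and> (\<forall>\<alpha>\<in>v. sat (\<phi> \<alpha>) M (upd E g (b \<alpha>))))"

definition small_subsets :: "'c set \<Rightarrow> 'th set \<Rightarrow> 'c set set" where
  "small_subsets Mu \<Theta> = {u. u \<subseteq> Mu \<and> |u| <o |\<Theta>|}"

definition moral_problem ::
  "'i set \<Rightarrow> 'i set set \<Rightarrow> 'c set \<Rightarrow> 'th set \<Rightarrow> 'v set \<Rightarrow> ('r, 'f, 'v, 'k) fm set
   \<Rightarrow> ('r, 'f, 'v, 'k) fm set \<Rightarrow> ('c set \<Rightarrow> 'i set) \<Rightarrow> 'm itself \<Rightarrow> bool" where
  "moral_problem I D Mu \<Theta> E \<Delta> T a (_ :: 'm itself) \<longleftrightarrow>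
     (\<forall>u\<in>small_subsets Mu \<Theta>. a u \<in> D) \<and>
     (\<forall>u\<in>small_subsets Mu \<Theta>. \<forall>v\<in>small_subsets Mu \<Theta>. u \<subseteq> v \<longrightarrow> a v \<subseteq> a u) \<and>
     a {} = I \<and>
     (\<exists>\<phi>. (\<forall>\<alpha>\<in>Mu. \<phi> \<alpha> \<in> \<Delta>) \<and>
        (\<forall>A u. A \<subseteq> I \<longrightarrow> A \<noteq> {} \<longrightarrow> u \<in> small_subsets Mu \<Theta> \<longrightarrow>
           (\<exists>(M :: ('m, 'f, 'r) struc) b. is_model M T \<and>
              (\<forall>\<alpha>\<in>u. \<forall>y. y \<notin> E \<longrightarrow> b \<alpha> y \<in> carrier M) \<and>
              (\<forall>v. v \<subseteq> u \<longrightarrow>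
                 (A \<subseteq> a v \<longrightarrow> solvable M E \<phi> b v) \<and>
                 (A \<subseteq> I - a v \<longrightarrow> \<not> solvable M E \<phi> b v)))))"

definition moral_solution ::
  "'i set \<Rightarrow> 'i set set \<Rightarrow> 'c set \<Rightarrow> 'th set \<Rightarrow> ('c set \<Rightarrow> 'i set) \<Rightarrow> ('c set \<Rightarrow> 'i set) \<Rightarrow> bool" where
  "moral_solution I D Mu \<Theta> a b \<longleftrightarrow>
     (\<forall>u\<in>small_subsets Mu \<Theta>. b u \<in> D \<and> b u \<subseteq> a u \<and> b u = I \<inter> (\<Inter>\<alpha>\<in>u. b {\<alpha>})) \<and>
     b {} = I"

definition moral_filter ::
  "'i set \<Rightarrow> 'i set set \<Rightarrow> 'c set \<Rightarrow> 'th set \<Rightarrow> 'v set \<Rightarrow> ('r, 'f, 'v, 'k) fm set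
   \<Rightarrow> ('r, 'f, 'v, 'k) fm set \<Rightarrow> 'm itself \<Rightarrow> bool" where
  "moral_filter I D Mu \<Theta> E \<Delta> T TYPE_M \<longleftrightarrow>
     (\<forall>a. moral_problem I D Mu \<Theta> E \<Delta> T a TYPE_M \<longrightarrow> (\<exists>b. moral_solution I D Mu \<Theta> a b))"

text \<open>(lambda, theta, epsilon!, Delta)-saturation; lambda given as a cardinal
  (a well-order relation); a type p is a set of pairs (phi, parameters).\<close>
definition realized ::
  "('n, 'f, 'r) struc \<Rightarrow> 'v set \<Rightarrow> (('r, 'f, 'v, 'k) fm \<times> ('v \<Rightarrow> 'n)) set \<Rightarrow> bool" where
  "realized N E p \<longleftrightarrow>
     (\<exists>g. (\<forall>x\<in>E. g x \<in> carrier N) \<and> (\<forall>(\<phi>, c)\<in>p. sat \<phi> N (upd E g c)))"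

definition saturated ::
  "'l rel \<Rightarrow> 'th set \<Rightarrow> 'v set \<Rightarrow> ('r, 'f, 'v, 'k) fm set \<Rightarrow> ('n, 'f, 'r) struc \<Rightarrow> bool" where
  "saturated \<Lambda> \<Theta> E \<Delta> N \<longleftrightarrow>
     (\<forall>p. |p| <o \<Lambda> \<longrightarrow>
        (\<forall>(\<phi>, c)\<in>p. \<phi> \<in> \<Delta> \<and> (\<forall>y. y \<notin> E \<longrightarrow> c y \<in> carrier N)) \<longrightarrow>
        (\<forall>q. q \<subseteq> p \<longrightarrow> |q| <o |\<Theta>| \<longrightarrow> realized N E q) \<longrightarrow>
        realized N E p)"

definition red_class :: "'i set \<Rightarrow> 'i set set \<Rightarrow> ('i \<Rightarrow> ('m, 'f, 'r) struc) \<Rightarrow> ('i \<Rightarrow> 'm) \<Rightarrow> ('i \<Rightarrow> 'm) set" where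
  "red_class I D M g = {h \<in> Pi I (\<lambda>s. carrier (M s)). {s\<in>I. g s = h s} \<in> D}"

definition red_rep :: "('i \<Rightarrow> 'm) set \<Rightarrow> 'i \<Rightarrow> 'm" where
  "red_rep c = (SOME g. g \<in> c)"

definition reduced_product :: "'i set \<Rightarrow> 'i set set \<Rightarrow> ('i \<Rightarrow> ('m, 'f, 'r) struc) \<Rightarrow> (('i \<Rightarrow> 'm) set, 'f, 'r) struc" where
  "reduced_product I D M =
     \<lparr> carrier = red_class I D M ` Pi I (\<lambda>s. carrier (M s)),
       fn = (\<lambda>f cs. red_class I D M (\<lambda>s. fn (M s) f (map (\<lambda>c. red_rep c s) cs))),
       rel = (\<lambda>r cs. {s\<in>I. rel (M s) r (map (\<lambda>c. red_rep c s) cs)} \<in> D) \<rparr>"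

end

theory Submission
  imports Defs
begin

text \<open>
  For models M_s and a type p = {phi_alpha(x, c_alpha) : alpha < mu} over their reduced product,
  let a_u be the set of coordinates s at which the formulas phi_alpha(x, c_alpha[s]), alpha in u,
  have a common solution in M_s. As D is theta-complete, the theorem of Los holds for
  conjunctions of fewer than theta atomic formulas, so the subtype indexed by u, |u| < theta, is
  realized iff a_u is in D; thus a is a moral problem whenever p is (<theta)-satisfiable.
  Given a regularising family w_s, a solution b of a realizes p: the coordinate s solves the
  fewer than theta formulas indexed by {alpha in w_s : s in b_{alpha}}, and these coordinatewise
  solutions glue together. Conversely, every moral problem is realized coordinatewise by models
  of T; saturation realizes the resulting type, and the sets where this realization witnesses
  phi_alpha, cut down to {s : alpha in w_s}, form a solution.
\<close>

lemma theta_complete_INT: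
  assumes "theta_complete \<Theta> I D" and "\<forall>\<alpha>\<in>u. X \<alpha> \<in> D" and "|u| <o |\<Theta>|"
  shows "I \<inter> (\<Inter>\<alpha>\<in>u. X \<alpha>) \<in> D"
proof -
  have "|X ` u| <o |\<Theta>|"
    using card_of_image assms(3) by (rule ordLeq_ordLess_trans)
  moreover have "X ` u \<subseteq> D"
    using assms(2) by blast
  ultimately show ?thesis
    using assms(1) unfolding theta_complete_def by blast
qed

lemma singleton_small_subset:
  assumes "infinite \<Theta>" and "\<alpha> \<in> Mu"
  shows "{\<alpha>} \<in> small_subsets Mu \<Theta>"
proof -
  have "|{\<alpha>}| <o |\<Theta>|"
    using assms(1) by (intro finite_ordLess_infinite) (simp_all add: card_of_well_order_on Field_card_of)
  then show ?thesis
    using assms(2) by (simp add: small_subsets_def)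
qed

lemma solvable_mono: "v \<subseteq> u \<Longrightarrow> solvable M E \<phi> b u \<Longrightarrow> solvable M E \<phi> b v"
  unfolding solvable_def by blast

lemma solvable_empty: "struc_ok M \<Longrightarrow> solvable M E \<phi> b {}"
  unfolding solvable_def struc_ok_def by (auto intro: someI)

lemma solvable_cong:
  "(\<And>\<alpha>. \<alpha> \<in> u \<Longrightarrow> b \<alpha> = b' \<alpha>) \<Longrightarrow> solvable M E \<phi> b u \<longleftrightarrow> solvable M E \<phi> b' u"
  unfolding solvable_def by simp

definition solvable_set ::
  "'i set \<Rightarrow> ('i \<Rightarrow> ('m, 'f, 'r) struc) \<Rightarrow> 'v set \<Rightarrow> ('c \<Rightarrow> ('r, 'f, 'v, 'k) fm)
   \<Rightarrow> ('i \<Rightarrow> 'c \<Rightarrow> 'v \<Rightarrow> 'm) \<Rightarrow> 'c set \<Rightarrow> 'i set" where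
  "solvable_set I M E \<phi> b u = {s\<in>I. solvable (M s) E \<phi> (b s) u}"

definition red_type ::
  "'i set \<Rightarrow> 'i set set \<Rightarrow> ('i \<Rightarrow> ('m, 'f, 'r) struc) \<Rightarrow> ('c \<Rightarrow> ('r, 'f, 'v, 'k) fm)
   \<Rightarrow> ('i \<Rightarrow> 'c \<Rightarrow> 'v \<Rightarrow> 'm) \<Rightarrow> 'c set \<Rightarrow> (('r, 'f, 'v, 'k) fm \<times> ('v \<Rightarrow> ('i \<Rightarrow> 'm) set)) set" where
  "red_type I D M \<phi> b U = (\<lambda>\<alpha>. (\<phi> \<alpha>, \<lambda>y. red_class I D M (\<lambda>s. b s \<alpha> y))) ` U"

lemma realized_red_type_iff:
  "realized N E (red_type I D M \<phi> b U) \<longleftrightarrow>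
     (\<exists>g. (\<forall>x\<in>E. g x \<in> carrier N) \<and>
          (\<forall>\<alpha>\<in>U. sat (\<phi> \<alpha>) N (upd E g (\<lambda>y. red_class I D M (\<lambda>s. b s \<alpha> y)))))"
  by (simp add: realized_def red_type_def)

lemma realized_image_cong:
  assumes "\<forall>\<alpha>\<in>U. \<forall>y. y \<notin> E \<longrightarrow> c \<alpha> y = c' \<alpha> y"
  shows "realized N E ((\<lambda>\<alpha>. (\<phi> \<alpha>, c \<alpha>)) ` U) \<longleftrightarrow> realized N E ((\<lambda>\<alpha>. (\<phi> \<alpha>, c' \<alpha>)) ` U)"
proof -
  have "upd E g (c \<alpha>) = upd E g (c' \<alpha>)" if "\<alpha> \<in> U" for g \<alpha>
    using assms that by (auto simp: upd_def)
  then show ?thesis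
    by (auto simp: realized_def)
qed

locale filter_on =
  fixes I :: "'i set" and D :: "'i set set"
  assumes proper: "proper_filter I D"
begin

lemma top [simp]: "I \<in> D"
  using proper by (simp add: proper_filter_def)

lemma Int: "A \<in> D \<Longrightarrow> B \<in> D \<Longrightarrow> A \<inter> B \<in> D"
  using proper by (simp add: proper_filter_def)

lemma mono: "A \<in> D \<Longrightarrow> A \<subseteq> B \<Longrightarrow> B \<subseteq> I \<Longrightarrow> B \<in> D"
  using proper by (simp add: proper_filter_def)

lemma mono_Collect: "A \<in> D \<Longrightarrow> A \<subseteq> {s\<in>I. P s} \<Longrightarrow> {s\<in>I. P s} \<in> D"
  by (rule mono) auto

lemma Collect_list_all:
  "\<forall>t\<in>set ts. {s\<in>I. P t s} \<in> D \<Longrightarrow> {s\<in>I. \<forall>t\<in>set ts. P t s} \<in> D"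
proof (induction ts)
  case (Cons t ts)
  have "{s\<in>I. P t s} \<inter> {s\<in>I. \<forall>t\<in>set ts. P t s} \<in> D"
    using Cons by (intro Int) auto
  moreover have "{s\<in>I. \<forall>t\<in>set (t # ts). P t s} = {s\<in>I. P t s} \<inter> {s\<in>I. \<forall>t\<in>set ts. P t s}"
    by auto
  ultimately show ?case by simp
qed simp

lemma theta_complete_Collect_ball_iff:
  assumes "theta_complete \<Theta> I D" and "|K| <o |\<Theta>|"
  shows "{s\<in>I. \<forall>k\<in>K. P k s} \<in> D \<longleftrightarrow> (\<forall>k\<in>K. {s\<in>I. P k s} \<in> D)"
proof
  assume all: "{s\<in>I. \<forall>k\<in>K. P k s} \<in> D"
  show "\<forall>k\<in>K. {s\<in>I. P k s} \<in> D"
  proof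
    fix k assume k: "k \<in> K"
    show "{s\<in>I. P k s} \<in> D"
      by (rule mono_Collect[OF all]) (use k in blast)
  qed
next
  assume "\<forall>k\<in>K. {s\<in>I. P k s} \<in> D"
  then have "I \<inter> (\<Inter>k\<in>K. {s\<in>I. P k s}) \<in> D"
    by (rule theta_complete_INT[OF assms(1) _ assms(2)])
  moreover have "I \<inter> (\<Inter>k\<in>K. {s\<in>I. P k s}) = {s\<in>I. \<forall>k\<in>K. P k s}"
    by auto
  ultimately show "{s\<in>I. \<forall>k\<in>K. P k s} \<in> D"
    by simp
qed

lemma cong:
  assumes Z: "Z \<in> D" and PQ: "\<And>s. s \<in> Z \<Longrightarrow> P s \<longleftrightarrow> Q s"
  shows "{s\<in>I. P s} \<in> D \<longleftrightarrow> {s\<in>I. Q s} \<in> D"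
proof
  assume P: "{s\<in>I. P s} \<in> D"
  have "{s\<in>I. P s} \<inter> Z \<subseteq> {s\<in>I. Q s}" using PQ by blast
  then show "{s\<in>I. Q s} \<in> D" by (rule mono_Collect[OF Int[OF P Z]])
next
  assume Q: "{s\<in>I. Q s} \<in> D"
  have "{s\<in>I. Q s} \<inter> Z \<subseteq> {s\<in>I. P s}" using PQ by blast
  then show "{s\<in>I. P s} \<in> D" by (rule mono_Collect[OF Int[OF Q Z]])
qed

end

locale filter_product = filter_on +
  fixes M :: "'i \<Rightarrow> ('m, 'f, 'r) struc"
  assumes struc_ok: "\<forall>s\<in>I. struc_ok (M s)"
begin

abbreviation sections :: "('i \<Rightarrow> 'm) set" where
  "sections \<equiv> Pi I (\<lambda>s. carrier (M s))"

abbreviation cls :: "('i \<Rightarrow> 'm) \<Rightarrow> ('i \<Rightarrow> 'm) set" where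
  "cls \<equiv> red_class I D M"

abbreviation Prod :: "(('i \<Rightarrow> 'm) set, 'f, 'r) struc" where
  "Prod \<equiv> reduced_product I D M"

lemma carrier_Prod: "carrier Prod = cls ` sections"
  and fn_Prod: "fn Prod f cs = cls (\<lambda>s. fn (M s) f (map (\<lambda>c. red_rep c s) cs))"
  and rel_Prod: "rel Prod r cs \<longleftrightarrow> {s\<in>I. rel (M s) r (map (\<lambda>c. red_rep c s) cs)} \<in> D"
  by (simp_all add: reduced_product_def)

lemma in_cls_self: "g \<in> sections \<Longrightarrow> g \<in> cls g"
  by (simp add: red_class_def)

lemma cls_eq_iff:
  assumes "g \<in> sections" and "h \<in> sections"
  shows "cls g = cls h \<longleftrightarrow> {s\<in>I. g s = h s} \<in> D"
proof
  assume "cls g = cls h"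
  then have "g \<in> cls h" using in_cls_self assms(1) by blast
  then have "{s\<in>I. h s = g s} \<in> D" by (simp add: red_class_def)
  moreover have "{s\<in>I. h s = g s} = {s\<in>I. g s = h s}" by auto
  ultimately show "{s\<in>I. g s = h s} \<in> D" by simp
next
  assume gh: "{s\<in>I. g s = h s} \<in> D"
  have "{s\<in>I. g s = k s} \<in> D \<longleftrightarrow> {s\<in>I. h s = k s} \<in> D" for k
    by (rule cong[OF gh]) simp
  then show "cls g = cls h" unfolding red_class_def by blast
qed

lemma red_rep_cls:
  assumes g: "g \<in> sections"
  shows "red_rep (cls g) \<in> sections" and "cls (red_rep (cls g)) = cls g"
proof -
  have "red_rep (cls g) \<in> cls g"
    unfolding red_rep_def using in_cls_self[OF g] by (rule someI[where P = "\<lambda>h. h \<in> cls g"])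
  then have rep: "red_rep (cls g) \<in> sections" and "{s\<in>I. g s = red_rep (cls g) s} \<in> D"
    by (simp_all add: red_class_def)
  then show "red_rep (cls g) \<in> sections" and "cls (red_rep (cls g)) = cls g"
    using cls_eq_iff[OF g rep] by simp_all
qed

lemma red_rep_ae:
  assumes "g \<in> sections"
  shows "{s\<in>I. red_rep (cls g) s = g s} \<in> D"
  using red_rep_cls[OF assms] cls_eq_iff assms by simp

lemma red_rep_carrier:
  assumes "c \<in> carrier Prod"
  shows "red_rep c \<in> sections" and "cls (red_rep c) = c"
  using assms red_rep_cls by (auto simp: carrier_Prod)

lemma red_rep_list_ae:
  "set gs \<subseteq> sections \<Longrightarrow> {s\<in>I. \<forall>g\<in>set gs. red_rep (cls g) s = g s} \<in> D"
  using red_rep_ae by (intro Collect_list_all) auto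

lemma fn_section:
  assumes "set gs \<subseteq> sections"
  shows "(\<lambda>s. fn (M s) f (map (\<lambda>g. g s) gs)) \<in> sections"
proof
  fix s assume s: "s \<in> I"
  then have "set (map (\<lambda>g. g s) gs) \<subseteq> carrier (M s)"
    using assms by auto
  then show "fn (M s) f (map (\<lambda>g. g s) gs) \<in> carrier (M s)"
    using struc_ok s by (simp add: struc_ok_def)
qed

lemma fn_Prod_cls:
  assumes gs: "set gs \<subseteq> sections"
  shows "fn Prod f (map cls gs) = cls (\<lambda>s. fn (M s) f (map (\<lambda>g. g s) gs))"
proof -
  have "set (map (\<lambda>g. red_rep (cls g)) gs) \<subseteq> sections"
    using gs red_rep_cls(1) by auto
  then have reps: "(\<lambda>s. fn (M s) f (map (\<lambda>g. red_rep (cls g) s) gs)) \<in> sections"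
    using fn_section by (fastforce simp: comp_def)
  have "{s\<in>I. fn (M s) f (map (\<lambda>g. red_rep (cls g) s) gs) = fn (M s) f (map (\<lambda>g. g s) gs)} \<in> D"
    using red_rep_list_ae[OF gs] by (rule mono_Collect) (auto cong: map_cong)
  then show ?thesis
    using cls_eq_iff[OF reps fn_section[OF gs]] by (simp add: fn_Prod comp_def)
qed

lemma rel_Prod_cls:
  assumes gs: "set gs \<subseteq> sections"
  shows "rel Prod r (map cls gs) \<longleftrightarrow> {s\<in>I. rel (M s) r (map (\<lambda>g. g s) gs)} \<in> D"
  unfolding rel_Prod map_map comp_def using red_rep_list_ae[OF gs] by (rule cong) (simp cong: map_cong)

context
  fixes \<rho> :: "'i \<Rightarrow> 'v \<Rightarrow> 'm" and \<sigma> :: "'v \<Rightarrow> ('i \<Rightarrow> 'm) set"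
  assumes \<rho>_sections: "\<And>v. (\<lambda>s. \<rho> s v) \<in> sections"
    and \<sigma>_cls: "\<And>v. \<sigma> v = cls (\<lambda>s. \<rho> s v)"
begin

lemma eval_Prod:
  "(\<lambda>s. eval (M s) (\<rho> s) t) \<in> sections \<and> eval Prod \<sigma> t = cls (\<lambda>s. eval (M s) (\<rho> s) t)"
proof (induction t)
  case (Var v)
  then show ?case using \<rho>_sections \<sigma>_cls by simp
next
  case (App f ts)
  let ?h = "\<lambda>t s. eval (M s) (\<rho> s) t"
  have ts: "set (map ?h ts) \<subseteq> sections" and ts_cls: "map (eval Prod \<sigma>) ts = map cls (map ?h ts)"
    using App by auto
  show ?case
    using fn_section[OF ts] fn_Prod_cls[OF ts] by (simp add: ts_cls comp_def)
qed

lemma sat_atm_Prod: "sat_atm Prod \<sigma> a \<longleftrightarrow> {s\<in>I. sat_atm (M s) (\<rho> s) a} \<in> D"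
proof (cases a)
  case (Eq t u)
  then show ?thesis using eval_Prod[of t] eval_Prod[of u] cls_eq_iff by simp
next
  case (Rel r ts)
  let ?h = "\<lambda>t s. eval (M s) (\<rho> s) t"
  have ts: "set (map ?h ts) \<subseteq> sections" and ts_cls: "map (eval Prod \<sigma>) ts = map cls (map ?h ts)"
    using eval_Prod by auto
  show ?thesis
    using rel_Prod_cls[OF ts] Rel by (simp add: ts_cls comp_def)
qed

lemma sat_atomic_conj_Prod:
  assumes "theta_complete \<Theta> I D" and "atomic_conj \<Theta> \<phi>"
  shows "sat \<phi> Prod \<sigma> \<longleftrightarrow> {s\<in>I. sat \<phi> (M s) (\<rho> s)} \<in> D"
proof -
  obtain K h where \<phi>: "\<phi> = Conj K h" and K: "|K| <o |\<Theta>|" and atoms: "\<forall>k\<in>K. \<exists>a. h k = Atom a"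
    using assms(2) unfolding atomic_conj_def by blast
  have "sat (h k) Prod \<sigma> \<longleftrightarrow> {s\<in>I. sat (h k) (M s) (\<rho> s)} \<in> D" if "k \<in> K" for k
    using atoms that sat_atm_Prod by auto
  then have "sat \<phi> Prod \<sigma> \<longleftrightarrow> (\<forall>k\<in>K. {s\<in>I. sat (h k) (M s) (\<rho> s)} \<in> D)"
    using \<phi> by simp
  also have "\<dots> \<longleftrightarrow> {s\<in>I. \<forall>k\<in>K. sat (h k) (M s) (\<rho> s)} \<in> D"
    using theta_complete_Collect_ball_iff[OF assms(1) K] by simp
  finally show ?thesis
    using \<phi> by simp
qed

end

lemma sat_upd_Prod:
  assumes "theta_complete \<Theta> I D" and "atomic_conj \<Theta> \<phi>"
    and G: "\<forall>x\<in>E. (\<lambda>s. G s x) \<in> sections" and b: "\<forall>y. y \<notin> E \<longrightarrow> (\<lambda>s. b s y) \<in> sections"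
  shows "sat \<phi> Prod (upd E (\<lambda>x. cls (\<lambda>s. G s x)) (\<lambda>y. cls (\<lambda>s. b s y)))
     \<longleftrightarrow> {s\<in>I. sat \<phi> (M s) (upd E (G s) (b s))} \<in> D"
  by (rule sat_atomic_conj_Prod[OF _ _ assms(1,2)]) (use G b in \<open>auto simp: upd_def Pi_iff\<close>)

context
  fixes \<Theta> :: "'th set" and E :: "'v set" and \<phi> :: "'c \<Rightarrow> ('r, 'f, 'v, 'k) fm"
    and b :: "'i \<Rightarrow> 'c \<Rightarrow> 'v \<Rightarrow> 'm" and U :: "'c set"
  assumes theta_complete: "theta_complete \<Theta> I D"
    and atomic: "\<forall>\<alpha>\<in>U. atomic_conj \<Theta> (\<phi> \<alpha>)"
    and params: "\<forall>s\<in>I. \<forall>\<alpha>\<in>U. \<forall>y. y \<notin> E \<longrightarrow> b s \<alpha> y \<in> carrier (M s)"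
begin

lemma realized_red_type_if_solvable:
  assumes solvable: "\<forall>s\<in>I. solvable (M s) E \<phi> (b s) (u s)"
    and large: "\<forall>\<alpha>\<in>U. {s\<in>I. \<alpha> \<in> u s} \<in> D"
  shows "realized Prod E (red_type I D M \<phi> b U)"
proof -
  obtain G where G: "\<forall>s\<in>I. (\<forall>x\<in>E. G s x \<in> carrier (M s)) \<and>
      (\<forall>\<alpha>\<in>u s. sat (\<phi> \<alpha>) (M s) (upd E (G s) (b s \<alpha>)))"
    using bchoice[OF solvable[unfolded solvable_def]] by blast
  have "sat (\<phi> \<alpha>) Prod (upd E (\<lambda>x. cls (\<lambda>s. G s x)) (\<lambda>y. cls (\<lambda>s. b s \<alpha> y)))" if "\<alpha> \<in> U" for \<alpha>
  proof -
    have "{s\<in>I. \<alpha> \<in> u s} \<subseteq> {s\<in>I. sat (\<phi> \<alpha>) (M s) (upd E (G s) (b s \<alpha>))}"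
      using G by auto
    then show ?thesis
      using sat_upd_Prod[OF theta_complete, of "\<phi> \<alpha>" E G "\<lambda>s. b s \<alpha>"] mono_Collect large atomic params G that
      by auto
  qed
  moreover have "cls (\<lambda>s. G s x) \<in> carrier Prod" if "x \<in> E" for x
    using G that by (auto simp: carrier_Prod)
  ultimately show ?thesis
    unfolding realized_red_type_iff by (intro exI[of _ "\<lambda>x. cls (\<lambda>s. G s x)"]) blast
qed

lemma solvable_if_realized_red_type:
  assumes "realized Prod E (red_type I D M \<phi> b U)"
  obtains X where "\<forall>\<alpha>\<in>U. X \<alpha> \<in> D"
    and "\<forall>s\<in>I. \<forall>u\<subseteq>U. (\<forall>\<alpha>\<in>u. s \<in> X \<alpha>) \<longrightarrow> solvable (M s) E \<phi> (b s) u"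
proof -
  obtain g where g: "\<forall>x\<in>E. g x \<in> carrier Prod"
    and sat: "\<forall>\<alpha>\<in>U. sat (\<phi> \<alpha>) Prod (upd E g (\<lambda>y. cls (\<lambda>s. b s \<alpha> y)))"
    using assms unfolding realized_red_type_iff by blast
  define G where "G s x = red_rep (g x) s" for s x
  have G_sections: "\<forall>x\<in>E. (\<lambda>s. G s x) \<in> sections" and g_cls: "\<forall>x\<in>E. cls (\<lambda>s. G s x) = g x"
    using g red_rep_carrier by (simp_all add: G_def)
  define X where "X \<alpha> = {s\<in>I. sat (\<phi> \<alpha>) (M s) (upd E (G s) (b s \<alpha>))}" for \<alpha>
  have "X \<alpha> \<in> D" if \<alpha>: "\<alpha> \<in> U" for \<alpha>
  proof -
    have "upd E (\<lambda>x. cls (\<lambda>s. G s x)) = upd E g"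
      using g_cls by (auto simp: upd_def fun_eq_iff)
    then show ?thesis
      using sat_upd_Prod[OF theta_complete, of "\<phi> \<alpha>" E G "\<lambda>s. b s \<alpha>"] sat atomic params G_sections \<alpha>
      by (simp add: X_def)
  qed
  moreover have "\<forall>s\<in>I. \<forall>u\<subseteq>U. (\<forall>\<alpha>\<in>u. s \<in> X \<alpha>) \<longrightarrow> solvable (M s) E \<phi> (b s) u"
    using G_sections unfolding X_def solvable_def by blast
  ultimately show ?thesis
    using that by blast
qed

lemma realized_red_type_iff_solvable_set:
  assumes small: "|U| <o |\<Theta>|"
  shows "realized Prod E (red_type I D M \<phi> b U) \<longleftrightarrow> solvable_set I M E \<phi> b U \<in> D"
proof
  assume "realized Prod E (red_type I D M \<phi> b U)"
  then obtain X where X: "\<forall>\<alpha>\<in>U. X \<alpha> \<in> D"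
    and solv: "\<forall>s\<in>I. \<forall>u\<subseteq>U. (\<forall>\<alpha>\<in>u. s \<in> X \<alpha>) \<longrightarrow> solvable (M s) E \<phi> (b s) u"
    by (rule solvable_if_realized_red_type)
  have "I \<inter> (\<Inter>\<alpha>\<in>U. X \<alpha>) \<in> D"
    using theta_complete_INT[OF theta_complete X small] .
  moreover have "I \<inter> (\<Inter>\<alpha>\<in>U. X \<alpha>) \<subseteq> solvable_set I M E \<phi> b U"
    using solv by (auto simp: solvable_set_def)
  ultimately show "solvable_set I M E \<phi> b U \<in> D"
    unfolding solvable_set_def by (rule mono_Collect)
next
  assume large: "solvable_set I M E \<phi> b U \<in> D"
  show "realized Prod E (red_type I D M \<phi> b U)"
  proof (rule realized_red_type_if_solvable)
    show "\<forall>s\<in>I. solvable (M s) E \<phi> (b s) (if s \<in> solvable_set I M E \<phi> b U then U else {})"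
      using struc_ok by (auto simp: solvable_set_def intro!: solvable_empty)
    show "\<forall>\<alpha>\<in>U. {s\<in>I. \<alpha> \<in> (if s \<in> solvable_set I M E \<phi> b U then U else {})} \<in> D"
      using large by (auto simp: solvable_set_def cong: Collect_cong)
  qed
qed

end

lemma realized_red_type_red_rep:
  assumes "\<forall>\<alpha>\<in>U. \<forall>y. y \<notin> E \<longrightarrow> c \<alpha> y \<in> carrier Prod"
  shows "realized Prod E (red_type I D M \<phi> (\<lambda>s \<alpha> y. red_rep (c \<alpha> y) s) U)
    \<longleftrightarrow> realized Prod E ((\<lambda>\<alpha>. (\<phi> \<alpha>, c \<alpha>)) ` U)"
  unfolding red_type_def using assms red_rep_carrier(2) by (intro realized_image_cong) simp

context
  fixes \<Theta> :: "'th set" and Mu :: "'c set" and E :: "'v set" and \<phi> :: "'c \<Rightarrow> ('r, 'f, 'v, 'k) fm"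
    and b :: "'i \<Rightarrow> 'c \<Rightarrow> 'v \<Rightarrow> 'm"
  assumes theta_complete: "theta_complete \<Theta> I D"
    and atomic: "\<forall>\<alpha>\<in>Mu. atomic_conj \<Theta> (\<phi> \<alpha>)"
    and params: "\<forall>s\<in>I. \<forall>\<alpha>\<in>Mu. \<forall>y. y \<notin> E \<longrightarrow> b s \<alpha> y \<in> carrier (M s)"
begin

lemma moral_problem_solvable_set:
  assumes models: "\<forall>s\<in>I. is_model (M s) T" and \<Delta>: "\<forall>\<alpha>\<in>Mu. \<phi> \<alpha> \<in> \<Delta>"
    and realized: "\<forall>u\<in>small_subsets Mu \<Theta>. realized Prod E (red_type I D M \<phi> b u)"
  shows "moral_problem I D Mu \<Theta> E \<Delta> T (solvable_set I M E \<phi> b) TYPE('m)"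
  unfolding moral_problem_def
proof (intro conjI ballI impI)
  fix u assume u: "u \<in> small_subsets Mu \<Theta>"
  then have "u \<subseteq> Mu" and small: "|u| <o |\<Theta>|"
    by (simp_all add: small_subsets_def)
  then have "\<forall>\<alpha>\<in>u. atomic_conj \<Theta> (\<phi> \<alpha>)" and "\<forall>s\<in>I. \<forall>\<alpha>\<in>u. \<forall>y. y \<notin> E \<longrightarrow> b s \<alpha> y \<in> carrier (M s)"
    using atomic params by blast+
  from realized_red_type_iff_solvable_set[OF theta_complete this small]
  show "solvable_set I M E \<phi> b u \<in> D"
    using realized u by blast
next
  fix u v :: "'c set" assume "u \<subseteq> v"
  then show "solvable_set I M E \<phi> b v \<subseteq> solvable_set I M E \<phi> b u"
    by (auto simp: solvable_set_def intro: solvable_mono)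
next
  show "solvable_set I M E \<phi> b {} = I"
    using struc_ok by (auto simp: solvable_set_def intro: solvable_empty)
next
  show "\<exists>\<phi>'. (\<forall>\<alpha>\<in>Mu. \<phi>' \<alpha> \<in> \<Delta>) \<and>
     (\<forall>A u. A \<subseteq> I \<longrightarrow> A \<noteq> {} \<longrightarrow> u \<in> small_subsets Mu \<Theta> \<longrightarrow>
        (\<exists>(N :: ('m, 'f, 'r) struc) c. is_model N T \<and>
           (\<forall>\<alpha>\<in>u. \<forall>y. y \<notin> E \<longrightarrow> c \<alpha> y \<in> carrier N) \<and>
           (\<forall>v. v \<subseteq> u \<longrightarrow>
              (A \<subseteq> solvable_set I M E \<phi> b v \<longrightarrow> solvable N E \<phi>' c v) \<and>
              (A \<subseteq> I - solvable_set I M E \<phi> b v \<longrightarrow> \<not> solvable N E \<phi>' c v))))"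
  proof (intro exI[of _ \<phi>] conjI allI impI)
    fix A u assume "A \<subseteq> I" "A \<noteq> {}" "u \<in> small_subsets Mu \<Theta>"
    then obtain s where s: "s \<in> A" "s \<in> I" and "u \<subseteq> Mu"
      by (auto simp: small_subsets_def)
    show "\<exists>(N :: ('m, 'f, 'r) struc) c. is_model N T \<and>
           (\<forall>\<alpha>\<in>u. \<forall>y. y \<notin> E \<longrightarrow> c \<alpha> y \<in> carrier N) \<and>
           (\<forall>v. v \<subseteq> u \<longrightarrow>
              (A \<subseteq> solvable_set I M E \<phi> b v \<longrightarrow> solvable N E \<phi> c v) \<and>
              (A \<subseteq> I - solvable_set I M E \<phi> b v \<longrightarrow> \<not> solvable N E \<phi> c v))"
    proof (intro exI[of _ "M s"] exI[of _ "b s"] conjI allI ballI impI)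
      show "is_model (M s) T"
        using models s by blast
      show "b s \<alpha> y \<in> carrier (M s)" if "\<alpha> \<in> u" "y \<notin> E" for \<alpha> y
        using params s \<open>u \<subseteq> Mu\<close> that by blast
      show "solvable (M s) E \<phi> (b s) v" if "A \<subseteq> solvable_set I M E \<phi> b v" for v
        using that s by (auto simp: solvable_set_def)
      show "\<not> solvable (M s) E \<phi> (b s) v" if "A \<subseteq> I - solvable_set I M E \<phi> b v" for v
        using that s by (auto simp: solvable_set_def)
    qed
  qed (use \<Delta> in blast)
qed

context
  fixes w :: "'i \<Rightarrow> 'c set" and a :: "'c set \<Rightarrow> 'i set"
  assumes w_small: "\<forall>s\<in>I. w s \<in> small_subsets Mu \<Theta>"
    and w_large: "\<forall>\<alpha>\<in>Mu. {s\<in>I. \<alpha> \<in> w s} \<in> D"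
    and pointwise: "\<forall>s\<in>I. \<forall>v\<subseteq>w s. s \<in> a v \<longleftrightarrow> solvable (M s) E \<phi> (b s) v"
begin

lemma realized_if_moral_solution:
  assumes "infinite \<Theta>" and solution: "moral_solution I D Mu \<Theta> a bb"
  shows "realized Prod E (red_type I D M \<phi> b Mu)"
proof (rule realized_red_type_if_solvable[OF theta_complete atomic params])
  have solved: "\<forall>u\<in>small_subsets Mu \<Theta>. bb u \<in> D \<and> bb u \<subseteq> a u \<and> bb u = I \<inter> (\<Inter>\<alpha>\<in>u. bb {\<alpha>})"
    using solution unfolding moral_solution_def by blast
  let ?u = "\<lambda>s. {\<alpha> \<in> w s. s \<in> bb {\<alpha>}}"
  show "\<forall>s\<in>I. solvable (M s) E \<phi> (b s) (?u s)"
  proof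
    fix s assume s: "s \<in> I"
    have sub: "?u s \<subseteq> w s" by blast
    have "|w s| <o |\<Theta>|"
      using w_small s by (simp add: small_subsets_def)
    then have "|?u s| <o |\<Theta>|"
      by (rule ordLeq_ordLess_trans[OF card_of_mono1[OF sub]])
    then have "?u s \<in> small_subsets Mu \<Theta>"
      using sub w_small s by (auto simp: small_subsets_def)
    then have "bb (?u s) = I \<inter> (\<Inter>\<alpha>\<in>?u s. bb {\<alpha>})" and "bb (?u s) \<subseteq> a (?u s)"
      using solved by blast+
    then have "s \<in> a (?u s)"
      using s by blast
    then show "solvable (M s) E \<phi> (b s) (?u s)"
      using pointwise s sub by blast
  qed
  show "\<forall>\<alpha>\<in>Mu. {s\<in>I. \<alpha> \<in> ?u s} \<in> D"
  proof
    fix \<alpha> assume \<alpha>: "\<alpha> \<in> Mu"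
    have "bb {\<alpha>} \<in> D"
      using solved singleton_small_subset[OF assms(1) \<alpha>] by blast
    then have "{s\<in>I. \<alpha> \<in> w s} \<inter> bb {\<alpha>} \<in> D"
      using w_large \<alpha> by (simp add: Int)
    then show "{s\<in>I. \<alpha> \<in> ?u s} \<in> D"
      by (rule mono_Collect) blast
  qed
qed

lemma small_subtypes_realized:
  assumes "\<forall>u\<in>small_subsets Mu \<Theta>. a u \<in> D"
    and q: "q \<subseteq> red_type I D M \<phi> b Mu" and q_small: "|q| <o |\<Theta>|"
  shows "realized Prod E q"
proof -
  obtain u where u: "u \<subseteq> Mu" "inj_on (\<lambda>\<alpha>. (\<phi> \<alpha>, \<lambda>y. cls (\<lambda>s. b s \<alpha> y))) u"
    and q_eq: "q = red_type I D M \<phi> b u"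
    using q unfolding red_type_def subset_image_inj by blast
  then have small: "|u| <o |\<Theta>|"
    using card_of_ordLeq[of u q] q_small ordLeq_ordLess_trans unfolding red_type_def by blast
  then have "a u \<in> D"
    using assms(1) u(1) by (simp add: small_subsets_def)
  moreover have "I \<inter> (\<Inter>\<alpha>\<in>u. {s\<in>I. \<alpha> \<in> w s}) \<in> D"
    using w_large u(1) by (intro theta_complete_INT[OF theta_complete _ small]) blast
  ultimately have "a u \<inter> (I \<inter> (\<Inter>\<alpha>\<in>u. {s\<in>I. \<alpha> \<in> w s})) \<in> D"
    by (rule Int)
  moreover have "a u \<inter> (I \<inter> (\<Inter>\<alpha>\<in>u. {s\<in>I. \<alpha> \<in> w s})) \<subseteq> solvable_set I M E \<phi> b u"
    using pointwise by (auto simp: solvable_set_def)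
  ultimately have "solvable_set I M E \<phi> b u \<in> D"
    unfolding solvable_set_def by (rule mono_Collect)
  then show ?thesis
    using realized_red_type_iff_solvable_set[OF theta_complete _ _ small] atomic params u(1) q_eq
    by blast
qed

lemma moral_solution_if_realized:
  assumes "realized Prod E (red_type I D M \<phi> b Mu)"
  shows "\<exists>bb. moral_solution I D Mu \<Theta> a bb"
proof -
  obtain X where X: "\<forall>\<alpha>\<in>Mu. X \<alpha> \<in> D"
    and solvable: "\<forall>s\<in>I. \<forall>u\<subseteq>Mu. (\<forall>\<alpha>\<in>u. s \<in> X \<alpha>) \<longrightarrow> solvable (M s) E \<phi> (b s) u"
    using solvable_if_realized_red_type[OF theta_complete atomic params assms] by blast
  define bb where "bb u = I \<inter> (\<Inter>\<alpha>\<in>u. X \<alpha> \<inter> {s\<in>I. \<alpha> \<in> w s})" for u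
  have "bb u \<in> D" and "bb u \<subseteq> a u" if "u \<in> small_subsets Mu \<Theta>" for u
  proof -
    have u: "u \<subseteq> Mu" "|u| <o |\<Theta>|"
      using that by (simp_all add: small_subsets_def)
    show "bb u \<in> D"
      unfolding bb_def using X w_large u by (intro theta_complete_INT[OF theta_complete]) (auto intro: Int)
    show "bb u \<subseteq> a u"
    proof
      fix s assume "s \<in> bb u"
      then have s: "s \<in> I" and "\<forall>\<alpha>\<in>u. s \<in> X \<alpha>" and "u \<subseteq> w s"
        by (auto simp: bb_def)
      then show "s \<in> a u"
        using solvable pointwise u(1) by blast
    qed
  qed
  then have "moral_solution I D Mu \<Theta> a bb"
    by (auto simp: moral_solution_def bb_def)
  then show ?thesis by blast
qed

end

end

lemma red_type_enumeration:
  assumes "p \<noteq> {}" and "|p| \<le>o |Mu|" and p_params: "\<forall>(\<psi>, c)\<in>p. \<forall>y. y \<notin> E \<longrightarrow> c y \<in> carrier Prod"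
  obtains e b where "e ` Mu = p" and "\<forall>s\<in>I. \<forall>\<alpha>\<in>Mu. \<forall>y. y \<notin> E \<longrightarrow> b s \<alpha> y \<in> carrier (M s)"
    and "\<And>U. U \<subseteq> Mu \<Longrightarrow>
      realized Prod E (red_type I D M (\<lambda>\<alpha>. fst (e \<alpha>)) b U) \<longleftrightarrow> realized Prod E (e ` U)"
proof -
  from card_of_ordLeq2[OF assms(1), THEN iffD2, OF assms(2)] obtain e where e: "e ` Mu = p" ..
  define c where "c \<alpha> = snd (e \<alpha>)" for \<alpha>
  have c_params: "\<forall>\<alpha>\<in>Mu. \<forall>y. y \<notin> E \<longrightarrow> c \<alpha> y \<in> carrier Prod"
  proof
    fix \<alpha> assume "\<alpha> \<in> Mu"
    then have "e \<alpha> \<in> p"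
      using e by blast
    then show "\<forall>y. y \<notin> E \<longrightarrow> c \<alpha> y \<in> carrier Prod"
      using p_params unfolding c_def by (cases "e \<alpha>") auto
  qed
  define b where "b = (\<lambda>s \<alpha> y. red_rep (c \<alpha> y) s)"
  show ?thesis
  proof (rule that[OF e])
    show "\<forall>s\<in>I. \<forall>\<alpha>\<in>Mu. \<forall>y. y \<notin> E \<longrightarrow> b s \<alpha> y \<in> carrier (M s)"
      unfolding b_def using c_params by (auto intro: Pi_mem[OF red_rep_carrier(1)])
    fix U assume "U \<subseteq> Mu"
    then have "realized Prod E (red_type I D M (\<lambda>\<alpha>. fst (e \<alpha>)) b U)
        \<longleftrightarrow> realized Prod E ((\<lambda>\<alpha>. (fst (e \<alpha>), c \<alpha>)) ` U)"
      unfolding b_def using c_params by (intro realized_red_type_red_rep) blast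
    also have "(\<lambda>\<alpha>. (fst (e \<alpha>), c \<alpha>)) ` U = e ` U"
      by (simp add: c_def)
    finally show "realized Prod E (red_type I D M (\<lambda>\<alpha>. fst (e \<alpha>)) b U) \<longleftrightarrow> realized Prod E (e ` U)" .
  qed
qed

lemma realized_if_moral_filter:
  fixes \<Theta> :: "'th set" and E :: "'v set" and \<Delta> T :: "('r, 'f, 'v, 'k) fm set"
  assumes "infinite \<Theta>" and theta_complete: "theta_complete \<Theta> I D"
    and w_small: "\<forall>s\<in>I. w s \<in> small_subsets Mu \<Theta>" and w_large: "\<forall>\<alpha>\<in>Mu. {s\<in>I. \<alpha> \<in> w s} \<in> D"
    and atomic: "\<forall>\<psi>\<in>\<Delta>. atomic_conj \<Theta> \<psi>" and models: "\<forall>s\<in>I. is_model (M s) T"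
    and moral: "moral_filter I D Mu \<Theta> E \<Delta> T TYPE('m)"
    and "p \<noteq> {}" and "|p| \<le>o |Mu|"
    and p_params: "\<forall>(\<psi>, c)\<in>p. \<psi> \<in> \<Delta> \<and> (\<forall>y. y \<notin> E \<longrightarrow> c y \<in> carrier Prod)"
    and p_small: "\<forall>q. q \<subseteq> p \<longrightarrow> |q| <o |\<Theta>| \<longrightarrow> realized Prod E q"
  shows "realized Prod E p"
proof -
  have "\<forall>(\<psi>, c)\<in>p. \<forall>y. y \<notin> E \<longrightarrow> c y \<in> carrier Prod"
    using p_params by auto
  with assms(8,9) obtain e b where e: "e ` Mu = p"
    and b_params: "\<forall>s\<in>I. \<forall>\<alpha>\<in>Mu. \<forall>y. y \<notin> E \<longrightarrow> b s \<alpha> y \<in> carrier (M s)"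
    and realized_iff: "\<And>U. U \<subseteq> Mu \<Longrightarrow>
      realized Prod E (red_type I D M (\<lambda>\<alpha>. fst (e \<alpha>)) b U) \<longleftrightarrow> realized Prod E (e ` U)"
    by (rule red_type_enumeration) blast
  let ?\<phi> = "\<lambda>\<alpha>. fst (e \<alpha>)"
  have \<Delta>: "\<forall>\<alpha>\<in>Mu. ?\<phi> \<alpha> \<in> \<Delta>"
    using p_params e by (auto simp: split_beta)
  then have atomic_\<phi>: "\<forall>\<alpha>\<in>Mu. atomic_conj \<Theta> (?\<phi> \<alpha>)"
    using atomic by blast
  have "\<forall>u\<in>small_subsets Mu \<Theta>. realized Prod E (red_type I D M ?\<phi> b u)"
  proof
    fix u assume "u \<in> small_subsets Mu \<Theta>"
    then have u: "u \<subseteq> Mu" "|u| <o |\<Theta>|"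
      by (simp_all add: small_subsets_def)
    have "e ` u \<subseteq> p"
      using e u(1) by blast
    moreover have "|e ` u| <o |\<Theta>|"
      by (rule ordLeq_ordLess_trans[OF card_of_image u(2)])
    ultimately show "realized Prod E (red_type I D M ?\<phi> b u)"
      using p_small realized_iff[OF u(1)] by blast
  qed
  with moral_problem_solvable_set[OF theta_complete atomic_\<phi> b_params models \<Delta>]
  obtain bb where "moral_solution I D Mu \<Theta> (solvable_set I M E ?\<phi> b) bb"
    using moral unfolding moral_filter_def by blast
  moreover have "\<forall>s\<in>I. \<forall>v\<subseteq>w s. s \<in> solvable_set I M E ?\<phi> b v \<longleftrightarrow> solvable (M s) E ?\<phi> (b s) v"
    by (simp add: solvable_set_def)
  ultimately have "realized Prod E (red_type I D M ?\<phi> b Mu)"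
    using realized_if_moral_solution[OF theta_complete atomic_\<phi> b_params w_small w_large _ assms(1)]
    by blast
  then show ?thesis
    using realized_iff e by blast
qed

lemma saturated_if_moral_filter:
  fixes \<Theta> :: "'th set" and E :: "'v set" and \<Delta> T :: "('r, 'f, 'v, 'k) fm set"
  assumes "infinite \<Theta>" and "theta_complete \<Theta> I D"
    and "\<forall>s\<in>I. w s \<in> small_subsets Mu \<Theta>" and "\<forall>\<alpha>\<in>Mu. {s\<in>I. \<alpha> \<in> w s} \<in> D"
    and "\<forall>\<psi>\<in>\<Delta>. atomic_conj \<Theta> \<psi>" and "\<forall>s\<in>I. is_model (M s) T"
    and "moral_filter I D Mu \<Theta> E \<Delta> T TYPE('m)"
  shows "saturated (cardSuc |Mu| ) \<Theta> E \<Delta> Prod"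
  unfolding saturated_def
proof (intro allI impI)
  fix p :: "(('r, 'f, 'v, 'k) fm \<times> ('v \<Rightarrow> ('i \<Rightarrow> 'm) set)) set"
  assume p_card: "|p| <o cardSuc |Mu|"
    and p_params: "\<forall>(\<psi>, c)\<in>p. \<psi> \<in> \<Delta> \<and> (\<forall>y. y \<notin> E \<longrightarrow> c y \<in> carrier Prod)"
    and p_small: "\<forall>q. q \<subseteq> p \<longrightarrow> |q| <o |\<Theta>| \<longrightarrow> realized Prod E q"
  show "realized Prod E p"
  proof (cases "p = {}")
    case True
    have "|{} :: (('r, 'f, 'v, 'k) fm \<times> ('v \<Rightarrow> ('i \<Rightarrow> 'm) set)) set| <o |\<Theta>|"
      using assms(1) by (intro finite_ordLess_infinite) (simp_all add: card_of_well_order_on Field_card_of)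
    then show ?thesis
      using p_small True by simp
  next
    case False
    moreover have "|p| \<le>o |Mu|"
      using cardSuc_ordLeq_ordLess[OF card_of_Card_order card_of_Card_order, THEN iffD1, OF p_card] .
    ultimately show ?thesis
      using realized_if_moral_filter[OF assms _ _ p_params p_small] by blast
  qed
qed

end

lemma filter_product_if_models:
  "proper_filter I D \<Longrightarrow> \<forall>s\<in>I. is_model (M s) T \<Longrightarrow> filter_product I D M"
  by unfold_locales (simp_all add: is_model_def)

lemma moral_problem_pointwise:
  fixes a :: "'c set \<Rightarrow> 'i set" and E :: "'v set"
  assumes problem: "moral_problem I D Mu \<Theta> E \<Delta> T a TYPE('m)"
    and w: "\<forall>s\<in>I. w s \<in> small_subsets Mu \<Theta>"
  obtains \<phi> and M :: "'i \<Rightarrow> ('m, 'f, 'r) struc" and b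
  where "\<forall>\<alpha>\<in>Mu. \<phi> \<alpha> \<in> \<Delta>" and "\<forall>s\<in>I. is_model (M s) T"
    and "\<forall>s\<in>I. \<forall>\<alpha> y. y \<notin> E \<longrightarrow> b s \<alpha> y \<in> carrier (M s)"
    and "\<forall>s\<in>I. \<forall>v\<subseteq>w s. s \<in> a v \<longleftrightarrow> solvable (M s) E \<phi> (b s) v"
proof -
  obtain \<phi> where \<Delta>: "\<forall>\<alpha>\<in>Mu. \<phi> \<alpha> \<in> \<Delta>" and models:
    "\<forall>A u. A \<subseteq> I \<longrightarrow> A \<noteq> {} \<longrightarrow> u \<in> small_subsets Mu \<Theta> \<longrightarrow>
       (\<exists>(N :: ('m, 'f, 'r) struc) c. is_model N T \<and>
          (\<forall>\<alpha>\<in>u. \<forall>y. y \<notin> E \<longrightarrow> c \<alpha> y \<in> carrier N) \<and>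
          (\<forall>v. v \<subseteq> u \<longrightarrow>
             (A \<subseteq> a v \<longrightarrow> solvable N E \<phi> c v) \<and> (A \<subseteq> I - a v \<longrightarrow> \<not> solvable N E \<phi> c v)))"
    using problem unfolding moral_problem_def by blast
  have "\<forall>s\<in>I. \<exists>Nc :: ('m, 'f, 'r) struc \<times> ('c \<Rightarrow> 'v \<Rightarrow> 'm). is_model (fst Nc) T \<and>
      (\<forall>\<alpha> y. y \<notin> E \<longrightarrow> snd Nc \<alpha> y \<in> carrier (fst Nc)) \<and>
      (\<forall>v\<subseteq>w s. s \<in> a v \<longleftrightarrow> solvable (fst Nc) E \<phi> (snd Nc) v)"
  proof
    fix s assume s: "s \<in> I"
    obtain N :: "('m, 'f, 'r) struc" and c where N: "is_model N T"
      and c: "\<forall>\<alpha>\<in>w s. \<forall>y. y \<notin> E \<longrightarrow> c \<alpha> y \<in> carrier N"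
      and solv: "\<forall>v. v \<subseteq> w s \<longrightarrow> ({s} \<subseteq> a v \<longrightarrow> solvable N E \<phi> c v) \<and>
          ({s} \<subseteq> I - a v \<longrightarrow> \<not> solvable N E \<phi> c v)"
      using models[rule_format, of "{s}" "w s"] s w by blast
    \<comment> \<open>Parameters are only provided for \<alpha> \<in> w s; the others are sent into the carrier so that
      every parameter of the reduced product has a representative in each coordinate.\<close>
    define c' where "c' \<alpha> = (if \<alpha> \<in> w s then c \<alpha> else (\<lambda>_. SOME x. x \<in> carrier N))" for \<alpha>
    have "\<forall>\<alpha> y. y \<notin> E \<longrightarrow> c' \<alpha> y \<in> carrier N"
      using c N by (auto simp: c'_def is_model_def struc_ok_def intro: someI)
    moreover have "solvable N E \<phi> c' v \<longleftrightarrow> solvable N E \<phi> c v" if "v \<subseteq> w s" for v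
      using that by (intro solvable_cong) (auto simp: c'_def)
    ultimately show "\<exists>Nc :: ('m, 'f, 'r) struc \<times> ('c \<Rightarrow> 'v \<Rightarrow> 'm). is_model (fst Nc) T \<and>
      (\<forall>\<alpha> y. y \<notin> E \<longrightarrow> snd Nc \<alpha> y \<in> carrier (fst Nc)) \<and>
      (\<forall>v\<subseteq>w s. s \<in> a v \<longleftrightarrow> solvable (fst Nc) E \<phi> (snd Nc) v)"
      using N solv s by (intro exI[of _ "(N, c')"]) auto
  qed
  then obtain Nc :: "'i \<Rightarrow> ('m, 'f, 'r) struc \<times> ('c \<Rightarrow> 'v \<Rightarrow> 'm)" where Nc: "\<forall>s\<in>I. is_model (fst (Nc s)) T \<and>
      (\<forall>\<alpha> y. y \<notin> E \<longrightarrow> snd (Nc s) \<alpha> y \<in> carrier (fst (Nc s))) \<and>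
      (\<forall>v\<subseteq>w s. s \<in> a v \<longleftrightarrow> solvable (fst (Nc s)) E \<phi> (snd (Nc s)) v)"
    by (rule bchoice[elim_format]) blast
  show ?thesis
  proof (rule that[of \<phi> "\<lambda>s. fst (Nc s)" "\<lambda>s. snd (Nc s)"])
    show "\<forall>\<alpha>\<in>Mu. \<phi> \<alpha> \<in> \<Delta>" by (rule \<Delta>)
  qed (use Nc in simp_all)
qed

lemma moral_filter_if_saturated:
  assumes "proper_filter I D" and theta_complete: "theta_complete \<Theta> I D"
    and w_small: "\<forall>s\<in>I. w s \<in> small_subsets Mu \<Theta>" and w_large: "\<forall>\<alpha>\<in>Mu. {s\<in>I. \<alpha> \<in> w s} \<in> D"
    and atomic: "\<forall>\<psi>\<in>\<Delta>. atomic_conj \<Theta> \<psi>"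
    and saturated: "\<forall>M :: 'i \<Rightarrow> ('m, 'f, 'r) struc. (\<forall>s\<in>I. is_model (M s) T) \<longrightarrow>
      saturated (cardSuc |Mu| ) \<Theta> E \<Delta> (reduced_product I D M)"
  shows "moral_filter I D Mu \<Theta> E \<Delta> T TYPE('m)"
  unfolding moral_filter_def
proof (intro allI impI)
  fix a assume problem: "moral_problem I D Mu \<Theta> E \<Delta> T a TYPE('m)"
  obtain \<phi> and M :: "'i \<Rightarrow> ('m, 'f, 'r) struc" and b where \<Delta>: "\<forall>\<alpha>\<in>Mu. \<phi> \<alpha> \<in> \<Delta>"
    and models: "\<forall>s\<in>I. is_model (M s) T"
    and params: "\<forall>s\<in>I. \<forall>\<alpha> y. y \<notin> E \<longrightarrow> b s \<alpha> y \<in> carrier (M s)"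
    and pointwise: "\<forall>s\<in>I. \<forall>v\<subseteq>w s. s \<in> a v \<longleftrightarrow> solvable (M s) E \<phi> (b s) v"
    by (rule moral_problem_pointwise[OF problem w_small])
  interpret filter_product I D M
    by (rule filter_product_if_models[OF assms(1) models])
  have atomic_\<phi>: "\<forall>\<alpha>\<in>Mu. atomic_conj \<Theta> (\<phi> \<alpha>)"
    using atomic \<Delta> by blast
  have params_Mu: "\<forall>s\<in>I. \<forall>\<alpha>\<in>Mu. \<forall>y. y \<notin> E \<longrightarrow> b s \<alpha> y \<in> carrier (M s)"
    using params by blast
  let ?p = "red_type I D M \<phi> b Mu"
  have "|?p| \<le>o |Mu|"
    unfolding red_type_def by (rule card_of_image)
  then have p_card: "|?p| <o cardSuc |Mu|"
    using cardSuc_ordLeq_ordLess[OF card_of_Card_order card_of_Card_order, THEN iffD2] by blast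
  have "cls (\<lambda>s. b s \<alpha> y) \<in> carrier Prod" if "y \<notin> E" for \<alpha> y
    using params that by (auto simp: carrier_Prod)
  then have p_params: "\<forall>(\<psi>, c)\<in>?p. \<psi> \<in> \<Delta> \<and> (\<forall>y. y \<notin> E \<longrightarrow> c y \<in> carrier Prod)"
    using \<Delta> by (auto simp: red_type_def)
  have "\<forall>u\<in>small_subsets Mu \<Theta>. a u \<in> D"
    using problem by (simp add: moral_problem_def)
  then have p_small: "\<forall>q. q \<subseteq> ?p \<longrightarrow> |q| <o |\<Theta>| \<longrightarrow> realized Prod E q"
    using small_subtypes_realized[OF theta_complete atomic_\<phi> params_Mu w_small w_large pointwise] by blast
  have "saturated (cardSuc |Mu| ) \<Theta> E \<Delta> Prod"
    using saturated models by blast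
  from this[unfolded saturated_def, rule_format, OF p_card p_params[rule_format] p_small[rule_format]]
  have "realized Prod E ?p" .
  then show "\<exists>bb. moral_solution I D Mu \<Theta> a bb"
    by (rule moral_solution_if_realized[OF theta_complete atomic_\<phi> params_Mu w_small w_large pointwise])
qed

theorem claim3p6:
  fixes I :: "'i set" and D :: "'i set set" and Mu :: "'c set" and \<Theta> :: "'th set"
    and E :: "'v set" and T \<Delta> :: "('r, 'f, 'v, 'k) fm set"
  assumes "infinite \<Theta>"
    and "(cexp_lt_fixed Mu \<Theta> \<and> |E| <o |Mu| ) \<or> |E| <o |\<Theta>|"
    and "proper_filter I D" and "theta_complete \<Theta> I D" and "regular_filter Mu \<Theta> I D"
    and "is_theory \<Theta> T"
    and "\<forall>\<phi>\<in>\<Delta>. atomic_conj \<Theta> \<phi>"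
  shows "moral_filter I D Mu \<Theta> E \<Delta> T TYPE('m)
     \<longleftrightarrow> (\<forall>M :: 'i \<Rightarrow> ('m, 'f, 'r) struc. (\<forall>s\<in>I. is_model (M s) T) \<longrightarrow>
            saturated (cardSuc (card_of Mu)) \<Theta> E \<Delta> (reduced_product I D M))"
proof -
  obtain w where w_small: "\<forall>s\<in>I. w s \<in> small_subsets Mu \<Theta>"
    and w_large: "\<forall>\<alpha>\<in>Mu. {s\<in>I. \<alpha> \<in> w s} \<in> D"
    using assms(5) unfolding regular_filter_def small_subsets_def by blast
  have "saturated (cardSuc |Mu| ) \<Theta> E \<Delta> (reduced_product I D M)"
    if "moral_filter I D Mu \<Theta> E \<Delta> T TYPE('m)" and models: "\<forall>s\<in>I. is_model (M s) T"
    for M :: "'i \<Rightarrow> ('m, 'f, 'r) struc"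
    using filter_product.saturated_if_moral_filter[OF filter_product_if_models[OF assms(3) models]
        assms(1,4) w_small w_large assms(7) models that(1)] .
  then show ?thesis
    using moral_filter_if_saturated[OF assms(3,4) w_small w_large assms(7)] by blast
qed

end
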